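(* Let $n\geq 1$. The assignment $\rho_i\mapsto\sigma_1\sigma_2\cdots\sigma_i$ ($1\leq i\leq n$) extends to a surjective group homomorphism from the group $\langle \rho_1,\dots,\rho_n\mid \rho_1\rho_n\rho_i=\rho_{i+1}\rho_n,\ 1\leq i\leq n-1\rangle$ (isomorphic to $G(n,n+1)$) onto the braid group $\mathcal{B}_{n+1}$.
   Context: $\mathcal{B}_{n+1}$ is the braid group with generators $\sigma_1,\dots,\sigma_n$ and relations $\sigma_i\sigma_{i+1}\sigma_i=\sigma_{i+1}\sigma_i\sigma_{i+1}$ for $1\leq i<n$ and $\sigma_i\sigma_j=\sigma_j\sigma_i$ for $|i-j|>1$. *)

theory Defs
  imports "HOL-Algebra.Group"
begin

text \<open>A word over an alphabet S is a list of letters (a, b) with a in S; b = True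
marks the formal inverse of the generator a.\<close>

type_synonym 'a word = "('a \<times> bool) list"

definition words :: "'a set \<Rightarrow> 'a word set" where
  "words S = {w. set (map fst w) \<subseteq> S}"

definition inv_word :: "'a word \<Rightarrow> 'a word" where
  "inv_word w = rev (map (\<lambda>(a, b). (a, \<not> b)) w)"

inductive pres_eq :: "'a set \<Rightarrow> 'a word set \<Rightarrow> 'a word \<Rightarrow> 'a word \<Rightarrow> bool"
  for S :: "'a set" and R :: "'a word set" where
  refl: "w \<in> words S \<Longrightarrow> pres_eq S R w w"
| sym: "pres_eq S R u v \<Longrightarrow> pres_eq S R v u"
| trans: "pres_eq S R u v \<Longrightarrow> pres_eq S R v w \<Longrightarrow> pres_eq S R u w"
| cancel: "u \<in> words S \<Longrightarrow> v \<in> words S \<Longrightarrow> a \<in> S \<Longrightarrow>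
           pres_eq S R (u @ [(a, b), (a, \<not> b)] @ v) (u @ v)"
| relator: "u \<in> words S \<Longrightarrow> v \<in> words S \<Longrightarrow> r \<in> R \<Longrightarrow> r \<in> words S \<Longrightarrow>
           pres_eq S R (u @ r @ v) (u @ v)"

definition pres_rel :: "'a set \<Rightarrow> 'a word set \<Rightarrow> ('a word \<times> 'a word) set" where
  "pres_rel S R = {(u, v). pres_eq S R u v}"

definition presented_group :: "'a set \<Rightarrow> 'a word set \<Rightarrow> 'a word set monoid" where
  "presented_group S R =
     \<lparr> carrier = words S // pres_rel S R,
       mult = (\<lambda>A B. \<Union>u\<in>A. \<Union>v\<in>B. pres_rel S R `` {u @ v}),
       one = pres_rel S R `` {[]} \<rparr>"

definition pres_class :: "'a set \<Rightarrow> 'a word set \<Rightarrow> 'a word \<Rightarrow> 'a word set" where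
  "pres_class S R w = pres_rel S R `` {w}"

definition gen :: "'a \<Rightarrow> 'a word" where
  "gen a = [(a, False)]"

definition G_relators :: "nat \<Rightarrow> nat word set" where
  "G_relators n = {gen 1 @ gen n @ gen i @ inv_word (gen (i+1) @ gen n) | i. 1 \<le> i \<and> i \<le> n - 1}"

text \<open>Relators of the braid group \<open>B_{n+1}\<close> on generators \<open>\<sigma>_1,\<dots>,\<sigma>_n\<close>.\<close>

definition braid_relators :: "nat \<Rightarrow> nat word set" where
  "braid_relators n =
     {gen i @ gen (i+1) @ gen i @ inv_word (gen (i+1) @ gen i @ gen (i+1)) | i. 1 \<le> i \<and> i < n}
   \<union> {gen i @ gen j @ inv_word (gen j @ gen i) | i j. i \<in> {1..n} \<and> j \<in> {1..n}
         \<and> (i + 1 < j \<or> j + 1 < i)}"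

definition G_group :: "nat \<Rightarrow> nat word set monoid" where
  "G_group n = presented_group {1..n} (G_relators n)"

definition braid_group :: "nat \<Rightarrow> nat word set monoid" where
  "braid_group n = presented_group {1..n} (braid_relators n)"

definition sigma_prefix :: "nat \<Rightarrow> nat word" where
  "sigma_prefix i = concat (map gen [1..<i+1])"

end

theory Submission
  imports Defs
begin

text \<open>Substituting \<open>\<sigma>\<^sub>1\<cdots>\<sigma>\<^sub>i\<close> for \<open>\<rho>\<^sub>i\<close> defines a map on words; it descends to the presented
groups once every relator is sent to a word trivial in \<open>B\<^sub>n\<^sub>+\<^sub>1\<close>. With \<open>\<Delta> = \<sigma>\<^sub>1\<cdots>\<sigma>\<^sub>n\<close>
one braid relation and a run of far commutations give \<open>\<Delta>\<sigma>\<^sub>j = \<sigma>\<^sub>j\<^sub>+\<^sub>1\<Delta>\<close> for \<open>j < n\<close>, hence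
\<open>\<Delta>\<sigma>\<^sub>1\<cdots>\<sigma>\<^sub>i = \<sigma>\<^sub>2\<cdots>\<sigma>\<^sub>i\<^sub>+\<^sub>1\<Delta>\<close>, and left multiplication by \<open>\<sigma>\<^sub>1\<close> is exactly the image of the
relation \<open>\<rho>\<^sub>1\<rho>\<^sub>n\<rho>\<^sub>i = \<rho>\<^sub>i\<^sub>+\<^sub>1\<rho>\<^sub>n\<close>. The map is onto because \<open>\<sigma>\<^sub>1\<close> is the image of \<open>\<rho>\<^sub>1\<close> and
\<open>\<sigma>\<^sub>a\<close> the image of \<open>\<rho>\<^sub>a\<^sub>-\<^sub>1\<^sup>-\<^sup>1\<rho>\<^sub>a\<close>.\<close>

lemma words_append [simp]: "u @ v \<in> words S \<longleftrightarrow> u \<in> words S \<and> v \<in> words S"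
  by (auto simp: words_def)

lemma words_Cons [simp]: "x # v \<in> words S \<longleftrightarrow> fst x \<in> S \<and> v \<in> words S"
  by (auto simp: words_def)

lemma words_Nil [simp]: "[] \<in> words S"
  by (auto simp: words_def)

lemma gen_in_words [simp]: "gen a \<in> words S \<longleftrightarrow> a \<in> S"
  by (simp add: gen_def)

lemma inv_word_Nil [simp]: "inv_word [] = []"
  by (simp add: inv_word_def)

lemma inv_word_append [simp]: "inv_word (u @ v) = inv_word v @ inv_word u"
  by (simp add: inv_word_def)

lemma inv_word_Cons [simp]: "inv_word ((a, b) # w) = inv_word w @ [(a, \<not> b)]"
  by (simp add: inv_word_def)

lemma inv_word_inv_word [simp]: "inv_word (inv_word w) = w"
  by (induction w) (auto simp: inv_word_def)

lemma inv_word_in_words [simp]: "inv_word w \<in> words S \<longleftrightarrow> w \<in> words S"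
  by (induction w) auto

declare pres_eq.trans [trans]

lemma pres_eq_in_words: "pres_eq S R u v \<Longrightarrow> u \<in> words S \<and> v \<in> words S"
  by (induction rule: pres_eq.induct) auto

lemma pres_eq_append_context:
  "pres_eq S R u v \<Longrightarrow> x \<in> words S \<Longrightarrow> y \<in> words S \<Longrightarrow> pres_eq S R (x @ u @ y) (x @ v @ y)"
proof (induction rule: pres_eq.induct)
  case (refl w)
  then show ?case by (intro pres_eq.refl) simp
next
  case (sym u v)
  then show ?case by (blast intro: pres_eq.sym)
next
  case (trans u v w)
  then show ?case by (blast intro: pres_eq.trans)
next
  case (cancel u v a b)
  have "pres_eq S R ((x @ u) @ [(a, b), (a, \<not> b)] @ (v @ y)) ((x @ u) @ (v @ y))"
    by (rule pres_eq.cancel) (use cancel in auto)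
  then show ?case by simp
next
  case (relator u v r)
  have "pres_eq S R ((x @ u) @ r @ (v @ y)) ((x @ u) @ (v @ y))"
    by (rule pres_eq.relator) (use relator in auto)
  then show ?case by simp
qed

lemma pres_eq_append:
  assumes "pres_eq S R u u'" and "pres_eq S R v v'"
  shows "pres_eq S R (u @ v) (u' @ v')"
proof -
  have "pres_eq S R ([] @ u @ v) ([] @ u' @ v)"
    by (rule pres_eq_append_context[OF assms(1)]) (use pres_eq_in_words[OF assms(2)] in auto)
  moreover have "pres_eq S R (u' @ v @ []) (u' @ v' @ [])"
    by (rule pres_eq_append_context[OF assms(2)]) (use pres_eq_in_words[OF assms(1)] in auto)
  ultimately show ?thesis by (auto intro: pres_eq.trans)
qed

lemma pres_eq_append_inv_word_right: "w \<in> words S \<Longrightarrow> pres_eq S R (w @ inv_word w) []"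
proof (induction w)
  case Nil
  then show ?case by (auto intro: pres_eq.refl)
next
  case (Cons p w)
  obtain a b where p: "p = (a, b)" by (cases p)
  have "pres_eq S R ([(a, b)] @ (w @ inv_word w) @ [(a, \<not> b)]) ([(a, b)] @ [] @ [(a, \<not> b)])"
    by (rule pres_eq_append_context) (use Cons p in auto)
  moreover have "pres_eq S R ([] @ [(a, b), (a, \<not> b)] @ []) ([] @ [])"
    by (rule pres_eq.cancel) (use Cons p in auto)
  ultimately show ?case
    unfolding p by (auto intro: pres_eq.trans)
qed

lemma pres_eq_append_inv_word_left: "w \<in> words S \<Longrightarrow> pres_eq S R (inv_word w @ w) []"
  using pres_eq_append_inv_word_right[of "inv_word w" S R] by simp

lemma pres_eq_relator:
  assumes "x @ inv_word y \<in> R" and "x \<in> words S" and "y \<in> words S"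
  shows "pres_eq S R x y"
proof -
  have "pres_eq S R ([] @ (x @ inv_word y) @ y) ([] @ y)"
    by (rule pres_eq.relator) (use assms in auto)
  moreover have "pres_eq S R (x @ (inv_word y @ y) @ []) (x @ [] @ [])"
    by (rule pres_eq_append_context[OF pres_eq_append_inv_word_left]) (use assms in auto)
  ultimately show ?thesis
    by (auto intro: pres_eq.trans pres_eq.sym)
qed

lemma pres_eq_append_inv_word_Nil:
  assumes "pres_eq S R x y"
  shows "pres_eq S R (x @ inv_word y) []"
proof -
  have y: "y \<in> words S" using pres_eq_in_words[OF assms] by simp
  have "pres_eq S R (x @ inv_word y) (y @ inv_word y)"
    by (rule pres_eq_append[OF assms pres_eq.refl]) (use y in simp)
  then show ?thesis
    using pres_eq_append_inv_word_right[OF y] by (rule pres_eq.trans)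
qed

lemma pres_eq_inv_word:
  assumes "pres_eq S R u v"
  shows "pres_eq S R (inv_word u) (inv_word v)"
proof -
  have u: "u \<in> words S" and v: "v \<in> words S" using pres_eq_in_words[OF assms] by auto
  have "pres_eq S R (inv_word u @ (v @ inv_word v) @ []) (inv_word u @ [] @ [])"
    by (rule pres_eq_append_context[OF pres_eq_append_inv_word_right]) (use u v in auto)
  moreover have "pres_eq S R ([] @ (inv_word u @ v) @ inv_word v) ([] @ (inv_word u @ u) @ inv_word v)"
    by (rule pres_eq_append_context[OF pres_eq_append[OF pres_eq.refl pres_eq.sym[OF assms]]])
       (use u v in auto)
  moreover have "pres_eq S R ([] @ (inv_word u @ u) @ inv_word v) ([] @ [] @ inv_word v)"
    by (rule pres_eq_append_context[OF pres_eq_append_inv_word_left]) (use u v in auto)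
  ultimately show ?thesis
    by simp (meson pres_eq.sym pres_eq.trans)
qed

lemma pres_class_eq: "pres_class S R w = {v. pres_eq S R w v}"
  by (auto simp: pres_class_def pres_rel_def)

lemma pres_class_eqI: "pres_eq S R u v \<Longrightarrow> pres_class S R u = pres_class S R v"
  unfolding pres_class_eq by (blast intro: pres_eq.trans pres_eq.sym)

lemma carrier_presented_group:
  "carrier (presented_group S R) = pres_class S R ` words S"
  by (auto simp: presented_group_def quotient_def pres_class_def)

lemma mult_presented_group:
  assumes "u \<in> words S" and "v \<in> words S"
  shows "pres_class S R u \<otimes>\<^bsub>presented_group S R\<^esub> pres_class S R v = pres_class S R (u @ v)"
proof -
  have same: "pres_class S R (u' @ v') = pres_class S R (u @ v)"
    if "u' \<in> pres_class S R u" and "v' \<in> pres_class S R v" for u' v'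
    using that unfolding pres_class_eq[of S R u] pres_class_eq[of S R v]
    by (intro pres_class_eqI pres_eq.sym[OF pres_eq_append]) simp_all
  have "u \<in> pres_class S R u" and "v \<in> pres_class S R v"
    using assms by (auto simp: pres_class_eq intro: pres_eq.refl)
  then have "(\<Union>u'\<in>pres_class S R u. \<Union>v'\<in>pres_class S R v. pres_class S R (u' @ v'))
             = pres_class S R (u @ v)"
    using same by blast
  then show ?thesis
    by (simp add: presented_group_def pres_class_def)
qed

subsection \<open>Homomorphisms induced by substitutions\<close>

definition subst_word :: "('a \<Rightarrow> 'b word) \<Rightarrow> 'a word \<Rightarrow> 'b word" where
  "subst_word f w = concat (map (\<lambda>(a, b). if b then inv_word (f a) else f a) w)"

lemma subst_word_Nil [simp]: "subst_word f [] = []"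
  by (simp add: subst_word_def)

lemma subst_word_append [simp]: "subst_word f (u @ v) = subst_word f u @ subst_word f v"
  by (simp add: subst_word_def)

lemma subst_word_Cons [simp]:
  "subst_word f ((a, b) # w) = (if b then inv_word (f a) else f a) @ subst_word f w"
  by (simp add: subst_word_def)

lemma subst_word_gen [simp]: "subst_word f (gen a) = f a"
  by (simp add: gen_def)

lemma subst_word_inv_word: "subst_word f (inv_word w) = inv_word (subst_word f w)"
  by (induction w) auto

lemma subst_word_in_words: "\<forall>a\<in>S. f a \<in> words T \<Longrightarrow> w \<in> words S \<Longrightarrow> subst_word f w \<in> words T"
  by (induction w) auto

definition subst_hom :: "('a \<Rightarrow> 'b word) \<Rightarrow> 'b set \<Rightarrow> 'b word set \<Rightarrow> 'a word set \<Rightarrow> 'b word set" where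
  "subst_hom f T R' A = pres_rel T R' `` (subst_word f ` A)"

locale substitution =
  fixes S :: "'a set" and R :: "'a word set" and T :: "'b set" and R' :: "'b word set"
    and f :: "'a \<Rightarrow> 'b word"
  assumes subst_in_words: "\<forall>a\<in>S. f a \<in> words T"
    and relator_trivial: "\<forall>r\<in>R. r \<in> words S \<longrightarrow> pres_eq T R' (subst_word f r) []"
begin

lemma pres_eq_subst_word: "pres_eq S R u v \<Longrightarrow> pres_eq T R' (subst_word f u) (subst_word f v)"
proof (induction rule: pres_eq.induct)
  case (refl w)
  then show ?case using subst_word_in_words[OF subst_in_words] by (auto intro: pres_eq.refl)
next
  case (sym u v)
  then show ?case by (blast intro: pres_eq.sym)
next
  case (trans u v w)
  then show ?case by (blast intro: pres_eq.trans)
next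
  case (cancel u v a b)
  have fa: "f a \<in> words T" using subst_in_words cancel by auto
  have "pres_eq T R' (subst_word f u @ (if b then inv_word (f a) @ f a else f a @ inv_word (f a))
          @ subst_word f v) (subst_word f u @ [] @ subst_word f v)"
    by (rule pres_eq_append_context)
       (use fa cancel subst_word_in_words[OF subst_in_words]
        pres_eq_append_inv_word_left pres_eq_append_inv_word_right in auto)
  then show ?case by (cases b) simp_all
next
  case (relator u v r)
  have "pres_eq T R' (subst_word f u @ subst_word f r @ subst_word f v)
          (subst_word f u @ [] @ subst_word f v)"
    by (rule pres_eq_append_context)
       (use relator relator_trivial subst_word_in_words[OF subst_in_words] in auto)
  then show ?case by simp
qed

lemma subst_hom_pres_class:
  assumes "w \<in> words S"
  shows "subst_hom f T R' (pres_class S R w) = pres_class T R' (subst_word f w)"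
proof
  show "subst_hom f T R' (pres_class S R w) \<subseteq> pres_class T R' (subst_word f w)"
    by (auto simp: subst_hom_def pres_class_def pres_rel_def
             intro: pres_eq.trans[OF pres_eq_subst_word])
  show "pres_class T R' (subst_word f w) \<subseteq> subst_hom f T R' (pres_class S R w)"
    using assms by (auto simp: subst_hom_def pres_class_def pres_rel_def intro: pres_eq.refl)
qed

lemma subst_hom_hom: "subst_hom f T R' \<in> hom (presented_group S R) (presented_group T R')"
proof (rule homI)
  fix x assume "x \<in> carrier (presented_group S R)"
  then show "subst_hom f T R' x \<in> carrier (presented_group T R')"
    by (auto simp: carrier_presented_group subst_hom_pres_class
             intro: subst_word_in_words[OF subst_in_words])
next
  fix x y
  assume "x \<in> carrier (presented_group S R)" and "y \<in> carrier (presented_group S R)"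
  then obtain u v where "u \<in> words S" "v \<in> words S" "x = pres_class S R u" "y = pres_class S R v"
    by (auto simp: carrier_presented_group)
  then show "subst_hom f T R' (x \<otimes>\<^bsub>presented_group S R\<^esub> y)
             = subst_hom f T R' x \<otimes>\<^bsub>presented_group T R'\<^esub> subst_hom f T R' y"
    by (simp add: mult_presented_group subst_hom_pres_class subst_word_in_words[OF subst_in_words])
qed

lemma subst_hom_surjective:
  assumes generators_reached: "\<forall>a\<in>T. \<exists>w\<in>words S. pres_eq T R' (subst_word f w) (gen a)"
  shows "subst_hom f T R' ` carrier (presented_group S R) = carrier (presented_group T R')"
proof -
  have preimage: "\<exists>w\<in>words S. pres_eq T R' (subst_word f w) v" if "v \<in> words T" for v
    using that
  proof (induction v)
    case Nil
    have "pres_eq T R' (subst_word f []) []" by (simp add: pres_eq.refl)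
    then show ?case using words_Nil by blast
  next
    case (Cons p v)
    obtain a b where p: "p = (a, b)" by (cases p)
    obtain w where w: "w \<in> words S" "pres_eq T R' (subst_word f w) v"
      using Cons by auto
    obtain u where u: "u \<in> words S" "pres_eq T R' (subst_word f u) (gen a)"
      using generators_reached Cons p by auto
    have "pres_eq T R' (subst_word f (if b then inv_word u else u)) [(a, b)]"
      using pres_eq_inv_word[OF u(2)] u(2) by (cases b) (simp_all add: subst_word_inv_word gen_def)
    from pres_eq_append[OF this w(2)] show ?case
      using u w p by (intro bexI[of _ "(if b then inv_word u else u) @ w"]) auto
  qed
  show ?thesis
  proof
    show "subst_hom f T R' ` carrier (presented_group S R) \<subseteq> carrier (presented_group T R')"
      using subst_hom_hom by (auto simp: hom_def)
    show "carrier (presented_group T R') \<subseteq> subst_hom f T R' ` carrier (presented_group S R)"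
    proof
      fix y assume "y \<in> carrier (presented_group T R')"
      then obtain v where v: "v \<in> words T" "y = pres_class T R' v"
        by (auto simp: carrier_presented_group)
      then obtain w where w: "w \<in> words S" "pres_eq T R' (subst_word f w) v"
        using preimage by blast
      then have "y = subst_hom f T R' (pres_class S R w)"
        using v by (simp add: subst_hom_pres_class pres_class_eqI)
      then show "y \<in> subst_hom f T R' ` carrier (presented_group S R)"
        using w by (auto simp: carrier_presented_group)
    qed
  qed
qed

end

subsection \<open>Computations in the braid group\<close>

definition pos_word :: "'a list \<Rightarrow> 'a word" where
  "pos_word xs = map (\<lambda>a. (a, False)) xs"

lemma pos_word_append [simp]: "pos_word (xs @ ys) = pos_word xs @ pos_word ys"
  by (simp add: pos_word_def)

lemma pos_word_in_words [simp]: "pos_word xs \<in> words S \<longleftrightarrow> set xs \<subseteq> S"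
  by (induction xs) (auto simp: pos_word_def)

lemma sigma_prefix_eq_pos_word: "sigma_prefix i = pos_word [1..<i+1]"
proof -
  have "concat (map gen xs) = pos_word xs" for xs :: "nat list"
    by (induction xs) (auto simp: gen_def pos_word_def)
  then show ?thesis by (simp add: sigma_prefix_def)
qed

lemma sigma_prefix_Suc: "sigma_prefix (Suc i) = sigma_prefix i @ gen (Suc i)"
  by (simp add: sigma_prefix_eq_pos_word pos_word_def gen_def)

abbreviation braid_eq :: "nat \<Rightarrow> nat word \<Rightarrow> nat word \<Rightarrow> bool" where
  "braid_eq n \<equiv> pres_eq {1..n} (braid_relators n)"

lemma braid_eq_adjacent:
  "1 \<le> i \<Longrightarrow> i < n \<Longrightarrow> braid_eq n (pos_word [i, i+1, i]) (pos_word [i+1, i, i+1])"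
  by (rule pres_eq_relator) (auto simp: braid_relators_def gen_def pos_word_def)

lemma braid_eq_far:
  "i \<in> {1..n} \<Longrightarrow> j \<in> {1..n} \<Longrightarrow> i + 1 < j \<or> j + 1 < i \<Longrightarrow> braid_eq n (pos_word [i, j]) (pos_word [j, i])"
  by (rule pres_eq_relator) (auto simp: braid_relators_def gen_def pos_word_def)

lemma braid_eq_commute_far_word:
  assumes "a \<in> {1..n}" and "\<forall>y\<in>set ys. y \<in> {1..n} \<and> (a + 1 < y \<or> y + 1 < a)"
  shows "braid_eq n (pos_word (a # ys)) (pos_word (ys @ [a]))"
  using assms(2)
proof (induction ys)
  case Nil
  then show ?case using assms(1) by (auto simp: pos_word_def intro: pres_eq.refl)
next
  case (Cons y ys)
  have "braid_eq n (pos_word [a, y] @ pos_word ys) (pos_word [y, a] @ pos_word ys)"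
    by (rule pres_eq_append[OF braid_eq_far pres_eq.refl]) (use assms(1) Cons in auto)
  moreover have "braid_eq n ([(y, False)] @ pos_word (a # ys) @ []) ([(y, False)] @ pos_word (ys @ [a]) @ [])"
    by (rule pres_eq_append_context) (use Cons in auto)
  ultimately show ?case
    by (simp add: pos_word_def) (rule pres_eq.trans)
qed

text \<open>\<open>\<Delta>\<sigma>\<^sub>j = \<sigma>\<^sub>j\<^sub>+\<^sub>1\<Delta>\<close>: move \<open>\<sigma>\<^sub>j\<close> left past \<open>\<sigma>\<^sub>j\<^sub>+\<^sub>2\<cdots>\<sigma>\<^sub>n\<close>, apply the braid relation to
\<open>\<sigma>\<^sub>j\<sigma>\<^sub>j\<^sub>+\<^sub>1\<sigma>\<^sub>j\<close>, then move \<open>\<sigma>\<^sub>j\<^sub>+\<^sub>1\<close> left past \<open>\<sigma>\<^sub>1\<cdots>\<sigma>\<^sub>j\<^sub>-\<^sub>1\<close>.\<close>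

lemma braid_eq_Delta_shift:
  assumes j: "1 \<le> j" "j < n"
  shows "braid_eq n (pos_word ([1..<n+1] @ [j])) (pos_word ((j+1) # [1..<n+1]))"
proof -
  define L where "L = [1..<j]"
  define R where "R = [j+2..<n+1]"
  have split: "[1..<n+1] = L @ [j, j+1] @ R"
  proof -
    have "[1..<n+1] = [1..<j] @ [j..<n+1]"
      using j upt_add_eq_append[of 1 j "n+1-j"] by simp
    also have "[j..<n+1] = j # (j+1) # [j+2..<n+1]"
      using j by (simp add: upt_conv_Cons)
    finally show ?thesis by (simp add: L_def R_def)
  qed
  have L: "set L \<subseteq> {1..n}" and R: "set R \<subseteq> {1..n}"
    using j by (auto simp: L_def R_def)
  have "braid_eq n (pos_word (L @ [j, j+1]) @ pos_word (R @ [j]) @ [])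
                   (pos_word (L @ [j, j+1]) @ pos_word (j # R) @ [])"
    by (rule pres_eq_append_context[OF pres_eq.sym[OF braid_eq_commute_far_word]])
       (use j L R in \<open>auto simp: R_def\<close>)
  moreover have "braid_eq n (pos_word L @ pos_word [j, j+1, j] @ pos_word R)
                            (pos_word L @ pos_word [j+1, j, j+1] @ pos_word R)"
    by (rule pres_eq_append_context[OF braid_eq_adjacent]) (use j L R in auto)
  moreover have "braid_eq n ([] @ pos_word (L @ [j+1]) @ pos_word ([j, j+1] @ R))
                            ([] @ pos_word ((j+1) # L) @ pos_word ([j, j+1] @ R))"
    by (rule pres_eq_append_context[OF pres_eq.sym[OF braid_eq_commute_far_word]])
       (use j L R in \<open>auto simp: L_def\<close>)
  ultimately show ?thesis
    unfolding split by (simp add: pos_word_def) (meson pres_eq.trans)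
qed

lemma braid_eq_Delta_shift_prefix:
  "i < n \<Longrightarrow> braid_eq n (pos_word ([1..<n+1] @ [1..<i+1])) (pos_word ([2..<i+2] @ [1..<n+1]))"
proof (induction i)
  case 0
  have "pos_word ([1..<n+1] @ [1..<0+1]) \<in> words {1..n}" by auto
  from pres_eq.refl[OF this] show ?case by simp
next
  case (Suc i)
  have "braid_eq n (pos_word ([1..<n+1] @ [1..<i+1]) @ pos_word [i+1])
                   (pos_word ([2..<i+2] @ [1..<n+1]) @ pos_word [i+1])"
    by (rule pres_eq_append[OF _ pres_eq.refl]) (use Suc in auto)
  then have "braid_eq n (pos_word ([1..<n+1] @ [1..<Suc i+1]))
                        (pos_word [2..<i+2] @ pos_word ([1..<n+1] @ [i+1]) @ [])"
    by simp
  also have "braid_eq n \<dots> (pos_word [2..<i+2] @ pos_word ((i+1+1) # [1..<n+1]) @ [])"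
    by (rule pres_eq_append_context[OF braid_eq_Delta_shift]) (use Suc in auto)
  also have "\<dots> = pos_word ([2..<Suc i+2] @ [1..<n+1])"
    by (simp add: pos_word_def)
  finally show ?case .
qed

lemma braid_eq_relation_image:
  assumes "1 \<le> i" and "i < n"
  shows "braid_eq n (sigma_prefix 1 @ sigma_prefix n @ sigma_prefix i)
                    (sigma_prefix (i+1) @ sigma_prefix n)"
proof -
  have "braid_eq n ([(1, False)] @ pos_word ([1..<n+1] @ [1..<i+1]) @ [])
                   ([(1, False)] @ pos_word ([2..<i+2] @ [1..<n+1]) @ [])"
    by (rule pres_eq_append_context[OF braid_eq_Delta_shift_prefix]) (use assms in auto)
  moreover have "[1..<i+1+1] = 1 # [2..<i+2]"
    by (simp add: upt_conv_Cons numeral_2_eq_2)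
  moreover have "sigma_prefix 1 = [(1, False)]"
    by (simp add: sigma_prefix_def gen_def)
  ultimately show ?thesis
    unfolding sigma_prefix_eq_pos_word[of n] sigma_prefix_eq_pos_word[of i]
      sigma_prefix_eq_pos_word[of "i+1"]
    by (simp add: pos_word_def)
qed

lemma braid_eq_gen_sigma_prefix:
  assumes "2 \<le> a" and "a \<le> n"
  shows "braid_eq n (inv_word (sigma_prefix (a - 1)) @ sigma_prefix a) (gen a)"
proof -
  have "sigma_prefix (a - 1) \<in> words {1..n}"
    using assms by (auto simp: sigma_prefix_eq_pos_word)
  then have "braid_eq n ([] @ (inv_word (sigma_prefix (a - 1)) @ sigma_prefix (a - 1)) @ gen a)
                        ([] @ [] @ gen a)"
    by (rule pres_eq_append_context[OF pres_eq_append_inv_word_left]) (use assms in auto)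
  moreover have "sigma_prefix a = sigma_prefix (a - 1) @ gen a"
    using sigma_prefix_Suc[of "a - 1"] assms by simp
  ultimately show ?thesis by simp
qed

interpretation braid_substitution:
  substitution "{1..n}" "G_relators n" "{1..n}" "braid_relators n" sigma_prefix
proof
  show "\<forall>a\<in>{1..n}. sigma_prefix a \<in> words {1..n}"
    by (auto simp: sigma_prefix_eq_pos_word)
  show "\<forall>r\<in>G_relators n. r \<in> words {1..n} \<longrightarrow> braid_eq n (subst_word sigma_prefix r) []"
  proof (intro ballI impI)
    fix r assume "r \<in> G_relators n"
    then obtain i where i: "1 \<le> i" "i < n"
      and r: "r = gen 1 @ gen n @ gen i @ inv_word (gen (i+1) @ gen n)"
      by (auto simp: G_relators_def)
    have "subst_word sigma_prefix r
          = (sigma_prefix 1 @ sigma_prefix n @ sigma_prefix i) @ inv_word (sigma_prefix (i+1) @ sigma_prefix n)"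
      by (simp add: r subst_word_inv_word)
    then show "braid_eq n (subst_word sigma_prefix r) []"
      using pres_eq_append_inv_word_Nil[OF braid_eq_relation_image[OF i]] by simp
  qed
qed

lemma braid_generators_reached:
  assumes "a \<in> {1..n}"
  shows "\<exists>w\<in>words {1..n}. braid_eq n (subst_word sigma_prefix w) (gen a)"
proof (cases "a = 1")
  case True
  have "braid_eq n (subst_word sigma_prefix (gen 1)) (gen a)"
    using True assms by (simp add: sigma_prefix_def pres_eq.refl)
  then show ?thesis
    using assms by (intro bexI[of _ "gen 1"]) auto
next
  case False
  then have "2 \<le> a" "a \<le> n" and "a - 1 \<in> {1..n}" using assms by auto
  then have "braid_eq n (subst_word sigma_prefix (inv_word (gen (a - 1)) @ gen a)) (gen a)"
    using braid_eq_gen_sigma_prefix by (simp add: subst_word_inv_word)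
  then show ?thesis
    using assms \<open>a - 1 \<in> {1..n}\<close> by (intro bexI[of _ "inv_word (gen (a - 1)) @ gen a"]) simp_all
qed

theorem proposition4p3:
  fixes n :: nat
  assumes "n \<ge> 1"
  shows "\<exists>h \<in> hom (G_group n) (braid_group n).
           (\<forall>i \<in> {1..n}. h (pres_class {1..n} (G_relators n) (gen i))
                          = pres_class {1..n} (braid_relators n) (sigma_prefix i))
         \<and> h ` carrier (G_group n) = carrier (braid_group n)"
proof (intro bexI conjI ballI)
  let ?h = "subst_hom sigma_prefix {1..n} (braid_relators n)"
  show "?h \<in> hom (G_group n) (braid_group n)"
    unfolding G_group_def braid_group_def by (rule braid_substitution.subst_hom_hom)
  show "?h (pres_class {1..n} (G_relators n) (gen i))
        = pres_class {1..n} (braid_relators n) (sigma_prefix i)" if "i \<in> {1..n}" for i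
    using braid_substitution.subst_hom_pres_class[of "gen i" n] that by simp
  show "?h ` carrier (G_group n) = carrier (braid_group n)"
    unfolding G_group_def braid_group_def
    using braid_generators_reached by (intro braid_substitution.subst_hom_surjective) blast
qed

end
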